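(* Let $f=\prod_{i=1}^n(y-a_i)\in\overline{K}[y]$ be reduced ($a_i$ pairwise distinct, $n\ge2$) with $\nu(a_i)>0$ for all $i$. Let $r\in\mathbf Q$ and $w\in\overline{\mathcal F}_r$. Then the solution $(u,v)\in\overline{\mathcal F}\times\overline{\mathcal E}$ of $u f'_x+vf'_y=wf$ is given by $$u=(\mathcal A_{|\overline{\mathcal F}})^{-1}w\in\overline{\mathcal F}_{r+1},\qquad v=\sum_{i=1}^n u_ia'_i\varepsilon_i\in\overline{\mathcal E}_{>r},$$ where $u=\sum_i u_i\varepsilon_i$. In particular $\overline{\mathcal F}_r f\subset\overline{\mathcal F}_{r+1}f'_x+\overline{\mathcal E}_{>r}f'_y$. More precisely, if $\mathrm{in}_r w=W$, then $\mathrm{in}_{r+1}u=(A_{|F})^{-1}W$.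
   Context: $\overline K=\bigcup_{d\ge1}\mathbf C[[x^{1/d}]][1/x]$ with valuation $\nu$; $'$ and $\partial_x$ denote $d/dx$ on $\overline K$ (with $(x^q)'=qx^{q-1}$), applied coefficientwise to polynomials in $y$. $\overline{\mathcal E}$ is the $\overline K$-space of polynomials in $y$ of degree $<n$, $\overline{\mathcal F}$ those of degree $<n-1$. $\varepsilon_i=\prod_{j\ne i}(y-a_j)$ form a basis of $\overline{\mathcal E}$, and $\overline{\mathcal F}=\{\sum u_i\varepsilon_i:\sum u_i=0\}$. For $w=\sum w_i\varepsilon_i$, $\mathrm{val}(w)=\inf_i\nu(w_i)$; $\overline{\mathcal E}_r=\{w:\mathrm{val}(w)\ge r\}$, $\overline{\mathcal E}_{>r}=\{w:\mathrm{val}(w)>r\}$, $\overline{\mathcal F}_r=\overline{\mathcal E}_r\cap\overline{\mathcal F}$. For $w\in\overline{\mathcal E}_r$, $\mathrm{in}_r w\in\mathbf C^n$ is the vector of coefficients of $x^r$ in $w_1,\dots,w_n$. With $m_{i,j}=\nu(a_i-a_j)$ and $m_i=\sum_{j\ne i}m_{i,j}$, $A$ is the matrix with off-diagonal entries $-m_{i,j}$ and diagonal entries $m_i$; $F=\{W\in\mathbf C^n:\sum W_i=0\}$ and $A_{|F}$ is the (invertible) restriction of $A$ to $F$. The complete magic matrix $\mathcal A$ is the symmetric $n\times n$ matrix over $\overline K$ with off-diagonal entries $-(a'_i-a'_j)/(a_i-a_j)$ and diagonal entries $\sum_{j\neq i}(a'_i-a'_j)/(a_i-a_j)$, acting on $\overline{\mathcal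 E}$ through coordinates in the basis $(\varepsilon_i)$; it maps $\overline{\mathcal F}$ into itself and $\mathcal A_{|\overline{\mathcal F}}$ is invertible. *)

theory Defs
  imports "HOL-Computational_Algebra.Computational_Algebra"
begin

text \<open>Level-d model of the field of Puiseux series: an element g of complex fls
  (formal Laurent series in t) stands for the Puiseux series g(x^(1/d)), i.e. t = x^(1/d).\<close>

type_synonym lser = "complex fls"

text \<open>d/dx at level d:  (x^(k/d))' = (k/d) x^(k/d - 1), i.e. t^k goes to (k/d) t^(k-d).\<close>
definition dx :: "nat \<Rightarrow> lser \<Rightarrow> lser" where
  "dx d g = fls_const (1 / of_nat d) * fls_shift (int d - 1) (fls_deriv g)"

text \<open>valuation nu (in Q) at level d; only used on nonzero elements.\<close>
definition nu :: "nat \<Rightarrow> lser \<Rightarrow> rat" where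
  "nu d g = of_int (fls_subdegree g) / of_nat d"

definition nu_ge :: "nat \<Rightarrow> lser \<Rightarrow> rat \<Rightarrow> bool" where
  "nu_ge d g r \<longleftrightarrow> g = 0 \<or> nu d g \<ge> r"

definition nu_gt :: "nat \<Rightarrow> lser \<Rightarrow> rat \<Rightarrow> bool" where
  "nu_gt d g r \<longleftrightarrow> g = 0 \<or> nu d g > r"

definition coeff_x :: "nat \<Rightarrow> lser \<Rightarrow> rat \<Rightarrow> complex" where
  "coeff_x d g r = (if r * of_nat d \<in> \<int> then fls_nth g \<lfloor>r * of_nat d\<rfloor> else 0)"

text \<open>Vectors (coordinates w.r.t. the basis eps_i) are functions on indices 0..<n.\<close>

definition E_ge :: "nat \<Rightarrow> nat \<Rightarrow> (nat \<Rightarrow> lser) \<Rightarrow> rat \<Rightarrow> bool" where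
  "E_ge n d w r \<longleftrightarrow> (\<forall>i<n. nu_ge d (w i) r)"

definition E_gt :: "nat \<Rightarrow> nat \<Rightarrow> (nat \<Rightarrow> lser) \<Rightarrow> rat \<Rightarrow> bool" where
  "E_gt n d w r \<longleftrightarrow> (\<forall>i<n. nu_gt d (w i) r)"

definition inF :: "nat \<Rightarrow> (nat \<Rightarrow> 'a::comm_monoid_add) \<Rightarrow> bool" where
  "inF n w \<longleftrightarrow> (\<Sum>i<n. w i) = 0"

definition in_r :: "nat \<Rightarrow> (nat \<Rightarrow> lser) \<Rightarrow> rat \<Rightarrow> nat \<Rightarrow> complex" where
  "in_r d w r = (\<lambda>i. coeff_x d (w i) r)"

definition fpoly :: "nat \<Rightarrow> (nat \<Rightarrow> lser) \<Rightarrow> lser poly" where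
  "fpoly n a = (\<Prod>i<n. [:- a i, 1:])"

definition eps :: "nat \<Rightarrow> (nat \<Rightarrow> lser) \<Rightarrow> nat \<Rightarrow> lser poly" where
  "eps n a i = (\<Prod>j\<in>{..<n} - {i}. [:- a j, 1:])"

definition vec_poly :: "nat \<Rightarrow> (nat \<Rightarrow> lser) \<Rightarrow> (nat \<Rightarrow> lser) \<Rightarrow> lser poly" where
  "vec_poly n a w = (\<Sum>i<n. smult (w i) (eps n a i))"

definition pdx :: "nat \<Rightarrow> lser poly \<Rightarrow> lser poly" where
  "pdx d p = map_poly (dx d) p"

definition magic :: "nat \<Rightarrow> nat \<Rightarrow> (nat \<Rightarrow> lser) \<Rightarrow> nat \<Rightarrow> nat \<Rightarrow> lser" where
  "magic n d a i j = (if i = j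
     then (\<Sum>k\<in>{..<n} - {i}. (dx d (a i) - dx d (a k)) / (a i - a k))
     else - (dx d (a i) - dx d (a j)) / (a i - a j))"

definition magic_app :: "nat \<Rightarrow> nat \<Rightarrow> (nat \<Rightarrow> lser) \<Rightarrow> (nat \<Rightarrow> lser) \<Rightarrow> nat \<Rightarrow> lser" where
  "magic_app n d a u = (\<lambda>i. \<Sum>j<n. magic n d a i j * u j)"

definition Amat :: "nat \<Rightarrow> nat \<Rightarrow> (nat \<Rightarrow> lser) \<Rightarrow> nat \<Rightarrow> nat \<Rightarrow> rat" where
  "Amat n d a i j = (if i = j then (\<Sum>k\<in>{..<n} - {i}. nu d (a i - a k))
                     else - nu d (a i - a j))"

definition Amat_app :: "nat \<Rightarrow> nat \<Rightarrow> (nat \<Rightarrow> lser) \<Rightarrow> (nat \<Rightarrow> complex) \<Rightarrow> nat \<Rightarrow> complex" where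
  "Amat_app n d a W = (\<lambda>i. \<Sum>j<n. of_rat (Amat n d a i j) * W j)"

end

theory Submission
  imports Defs "Jordan_Normal_Form.Determinant"
begin

text \<open>Writing \<open>\<epsilon>\<^sub>i\<epsilon>\<^sub>j = f \<epsilon>\<^sub>i\<^sub>j\<close> and \<open>\<epsilon>\<^sub>i - \<epsilon>\<^sub>j = (a\<^sub>i - a\<^sub>j) \<epsilon>\<^sub>i\<^sub>j\<close>, one finds the identity
  \<open>u f'\<^sub>x + (\<Sum> u\<^sub>i a'\<^sub>i \<epsilon>\<^sub>i) f'\<^sub>y = f \<cdot> \<A>u\<close>; evaluating the equation \<open>u f'\<^sub>x + v f'\<^sub>y = w f\<close>
  at the roots \<open>a\<^sub>k\<close> forces \<open>v\<^sub>k = u\<^sub>k a'\<^sub>k\<close> and then \<open>\<A>u = w\<close>. So everything reduces to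
  inverting \<open>\<A>\<close> on \<open>F\<close>. The logarithmic derivative of \<open>a\<^sub>i - a\<^sub>j\<close> starts with
  \<open>m\<^sub>i\<^sub>j x\<^sup>-\<^sup>1\<close>, so the leading part of \<open>\<A>\<close> is \<open>x\<^sup>-\<^sup>1 A\<close>; and \<open>A\<close> is a Laplacian with positive
  weights, injective on sum-zero vectors by the maximum principle. Hence \<open>\<A>\<close> lowers the
  valuation of every nonzero vector of \<open>F\<close> by exactly one. This gives injectivity (and by
  finite dimension surjectivity) of \<open>\<A>\<close> on \<open>F\<close>, the valuation bounds for \<open>u\<close> and \<open>v\<close>,
  and \<open>A (in\<^sub>r\<^sub>+\<^sub>1 u) = in\<^sub>r w\<close>.\<close>

no_notation index_mat (infixl \<open>$$\<close> 100) and fps_nth (infixl \<open>$\<close> 75)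
notation fls_nth (infixl \<open>$$\<close> 75)

lemma square_system_solvable_if_injective:
  fixes M :: "nat \<Rightarrow> nat \<Rightarrow> 'a::field" and b :: "nat \<Rightarrow> 'a"
  assumes inj: "\<And>x. \<forall>i<n. (\<Sum>j<n. M i j * x j) = 0 \<Longrightarrow> \<forall>i<n. x i = 0"
  shows "\<exists>x. \<forall>i<n. (\<Sum>j<n. M i j * x j) = b i"
proof -
  define A where "A = mat n n (\<lambda>(i,j). M i j)"
  have A: "A \<in> carrier_mat n n" unfolding A_def by simp
  have mult_A: "(A *\<^sub>v v) $ i = (\<Sum>j<n. M i j * v $ j)" if "i < n" "v \<in> carrier_vec n" for v i
    using that unfolding A_def
    by (auto simp: mult_mat_vec_def scalar_prod_def atLeast0LessThan intro!: sum.cong)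
  have "det A \<noteq> 0"
  proof
    assume "det A = 0"
    then obtain v where v: "v \<in> carrier_vec n" "v \<noteq> 0\<^sub>v n" "A *\<^sub>v v = 0\<^sub>v n"
      using det_0_iff_vec_prod_zero_field[OF A] by blast
    then have "\<forall>i<n. (\<Sum>j<n. M i j * v $ j) = 0"
      using mult_A by (metis index_zero_vec(1))
    then have "\<forall>i<n. v $ i = 0" using inj by blast
    then have "v = 0\<^sub>v n" using v(1) by (intro eq_vecI) auto
    with v(2) show False by simp
  qed
  define y where "y = (1 / det A) \<cdot>\<^sub>v (adj_mat A *\<^sub>v vec n b)"
  have y: "y \<in> carrier_vec n" using adj_mat(1)[OF A] unfolding y_def by simp
  have "A *\<^sub>v y = (1 / det A) \<cdot>\<^sub>v ((A * adj_mat A) *\<^sub>v vec n b)"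
    unfolding y_def using adj_mat(1)[OF A] A by (simp add: mult_mat_vec)
  also have "\<dots> = (1 / det A) \<cdot>\<^sub>v (det A \<cdot>\<^sub>v vec n b)"
    using adj_mat(2)[OF A] by auto
  also have "\<dots> = vec n b"
    using \<open>det A \<noteq> 0\<close> by (intro eq_vecI) auto
  finally show ?thesis using mult_A[OF _ y] by (metis index_vec)
qed

section \<open>Vanishing of low-order coefficients\<close>

definition vanishes_below :: "int \<Rightarrow> 'a::zero fls \<Rightarrow> bool" where
  "vanishes_below p f \<longleftrightarrow> (\<forall>k<p. f $$ k = 0)"

lemma vanishes_below_mono: "vanishes_below p f \<Longrightarrow> q \<le> p \<Longrightarrow> vanishes_below q f"
  unfolding vanishes_below_def by auto

lemma vanishes_below_zero [simp]: "vanishes_below p 0"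
  unfolding vanishes_below_def by auto

lemma vanishes_below_iff_subdegree:
  "f \<noteq> 0 \<Longrightarrow> vanishes_below p f \<longleftrightarrow> p \<le> fls_subdegree f"
  unfolding vanishes_below_def
  by (meson fls_eq0_below_subdegree fls_subdegree_geI le_less_trans not_le)

lemma vanishes_below_sum:
  "(\<And>x. x \<in> S \<Longrightarrow> vanishes_below p (f x)) \<Longrightarrow> vanishes_below p (\<Sum>x\<in>S. f x)"
  unfolding vanishes_below_def by (simp add: fls_nth_sum)

lemma vanishes_below_diff:
  "vanishes_below p f \<Longrightarrow> vanishes_below p g \<Longrightarrow> vanishes_below p (f - g)"
  unfolding vanishes_below_def by simp

lemma vanishes_below_uminus: "vanishes_below p f \<Longrightarrow> vanishes_below p (- f)"
  unfolding vanishes_below_def by simp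

lemma vanishes_below_mult:
  fixes f g :: "'a::comm_ring_1 fls"
  assumes "vanishes_below p f" "vanishes_below q g"
  shows "vanishes_below (p + q) (f * g)" and "(f * g) $$ (p + q) = f $$ p * g $$ q"
proof -
  have "vanishes_below (p + q) (f * g) \<and> (f * g) $$ (p + q) = f $$ p * g $$ q"
  proof (cases "f = 0 \<or> g = 0")
    case False
    then have f: "p \<le> fls_subdegree f" and g: "q \<le> fls_subdegree g"
      using assms vanishes_below_iff_subdegree by blast+
    have low: "vanishes_below (p + q) (f * g)"
      unfolding vanishes_below_def using f g by (auto intro!: fls_times_nth_eq0)
    show ?thesis
    proof (cases "fls_subdegree f = p \<and> fls_subdegree g = q")
      case True
      then show ?thesis using low fls_times_base[of f g] by simp
    next
      case False
      then have "(f * g) $$ (p + q) = 0" using f g by (intro fls_times_nth_eq0) auto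
      moreover have "f $$ p = 0 \<or> g $$ q = 0" using False f g by auto
      ultimately show ?thesis using low by auto
    qed
  qed auto
  then show "vanishes_below (p + q) (f * g)" "(f * g) $$ (p + q) = f $$ p * g $$ q"
    by auto
qed

lemma nu_ge_iff_vanishes_below:
  "d \<ge> 1 \<Longrightarrow> nu_ge d g r \<longleftrightarrow> vanishes_below \<lceil>r * of_nat d\<rceil> g"
proof (cases "g = 0")
  case False
  assume d: "d \<ge> 1"
  have "nu d g \<ge> r \<longleftrightarrow> r * of_nat d \<le> of_int (fls_subdegree g)"
    using d unfolding nu_def by (simp add: pos_le_divide_eq)
  also have "\<dots> \<longleftrightarrow> \<lceil>r * of_nat d\<rceil> \<le> fls_subdegree g" by (simp add: ceiling_le_iff)
  finally show ?thesis using False vanishes_below_iff_subdegree unfolding nu_ge_def by auto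
qed (auto simp: nu_ge_def)

lemma nu_gt_iff_vanishes_below:
  "d \<ge> 1 \<Longrightarrow> nu_gt d g r \<longleftrightarrow> vanishes_below (\<lfloor>r * of_nat d\<rfloor> + 1) g"
proof (cases "g = 0")
  case False
  assume d: "d \<ge> 1"
  have "nu d g > r \<longleftrightarrow> r * of_nat d < of_int (fls_subdegree g)"
    using d unfolding nu_def by (simp add: pos_less_divide_eq)
  also have "\<dots> \<longleftrightarrow> \<lfloor>r * of_nat d\<rfloor> + 1 \<le> fls_subdegree g"
    using floor_less_iff[of "r * of_nat d" "fls_subdegree g"] by linarith
  finally show ?thesis using False vanishes_below_iff_subdegree unfolding nu_gt_def by auto
qed (auto simp: nu_gt_def)

lemma E_ge_iff_vanishes_below:
  "d \<ge> 1 \<Longrightarrow> E_ge n d u r \<longleftrightarrow> (\<forall>i<n. vanishes_below \<lceil>r * of_nat d\<rceil> (u i))"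
  unfolding E_ge_def by (simp add: nu_ge_iff_vanishes_below)

lemma E_gt_iff_vanishes_below:
  "d \<ge> 1 \<Longrightarrow> E_gt n d u r \<longleftrightarrow> (\<forall>i<n. vanishes_below (\<lfloor>r * of_nat d\<rfloor> + 1) (u i))"
  unfolding E_gt_def by (simp add: nu_gt_iff_vanishes_below)

lemma ceiling_succ_mult_of_nat: "\<lceil>(r + 1) * of_nat d\<rceil> = \<lceil>r * of_nat d\<rceil> + int d"
proof -
  have "(r + 1) * of_nat d = r * of_nat d + of_int (int d)" by (simp add: distrib_right)
  then show ?thesis by (simp only: ceiling_add_of_int)
qed

lemma inF_in_r: "inF n u \<Longrightarrow> inF n (in_r d u s)"
  unfolding inF_def in_r_def coeff_x_def
  by (cases "s * of_nat d \<in> \<int>") (simp_all add: fls_nth_sum[symmetric])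

section \<open>The derivation \<open>d/dx\<close>\<close>

lemma dx_nth: "dx d g $$ k = of_int (k + int d) / of_nat d * g $$ (k + int d)"
  by (cases "d = 0") (simp_all add: dx_def field_simps)

lemma dx_zero [simp]: "dx d 0 = 0"
  by (simp add: fls_eq_iff dx_nth)

lemma dx_one [simp]: "dx d 1 = 0"
proof -
  have "dx d 1 $$ k = 0" for k
    by (cases "k + int d = 0") (simp_all add: dx_nth)
  then show ?thesis by (simp add: fls_eq_iff)
qed

lemma dx_add: "dx d (f + g) = dx d f + dx d g"
  by (simp add: fls_eq_iff dx_nth ring_distribs)

lemma dx_diff: "dx d (f - g) = dx d f - dx d g"
  by (simp add: fls_eq_iff dx_nth ring_distribs)

lemma dx_uminus: "dx d (- f) = - dx d f"
  by (simp add: fls_eq_iff dx_nth)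

lemma dx_mult: "dx d (f * g) = dx d f * g + f * dx d g"
  unfolding dx_def by (simp add: fls_shifted_times_simps algebra_simps)

lemma vanishes_below_dx: "vanishes_below p g \<Longrightarrow> vanishes_below (p - int d) (dx d g)"
  unfolding vanishes_below_def dx_nth by simp

lemma log_derivative_leading:
  assumes d: "d \<ge> 1" and b: "b \<noteq> 0" and e: "fls_subdegree b \<noteq> 0"
  shows "vanishes_below (- int d) (dx d b / b)"
    and "(dx d b / b) $$ (- int d) = of_int (fls_subdegree b) / of_nat d"
proof -
  define e where "e = fls_subdegree b"
  define q where "q = dx d b / b"
  have qb: "q * b = dx d b" unfolding q_def using b by simp
  have low_b: "vanishes_below e b" using b vanishes_below_iff_subdegree e_def by auto
  have b_e: "b $$ e \<noteq> 0" using b e_def by simp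
  have dx_b_e: "dx d b $$ (e - int d) = of_int e / of_nat d * b $$ e"
    unfolding dx_nth by simp
  then have "dx d b $$ (e - int d) \<noteq> 0" using b_e e d unfolding e_def by simp
  then have "fls_subdegree (dx d b) = e - int d"
    using vanishes_below_dx[OF low_b] unfolding vanishes_below_def
    by (intro fls_subdegree_eqI) auto
  moreover have "q \<noteq> 0" using qb \<open>dx d b $$ (e - int d) \<noteq> 0\<close> by auto
  ultimately have "fls_subdegree q = - int d" using qb b e_def
    by (metis add_diff_cancel_right' diff_conv_add_uminus fls_subdegree_mult add.commute)
  then have low_q: "vanishes_below (- int d) q"
    using vanishes_below_iff_subdegree[OF \<open>q \<noteq> 0\<close>] by simp
  have "q $$ (- int d) * b $$ e = of_int e / of_nat d * b $$ e"
    using vanishes_below_mult(2)[OF low_q low_b] qb dx_b_e by (simp add: algebra_simps)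
  then have "q $$ (- int d) = of_int e / of_nat d"
    using b_e by (metis mult_right_cancel times_divide_eq_left)
  then show "vanishes_below (- int d) (dx d b / b)"
    "(dx d b / b) $$ (- int d) = of_int (fls_subdegree b) / of_nat d"
    using low_q unfolding q_def e_def by auto
qed

lemma pdx_0 [simp]: "pdx d 0 = 0"
  unfolding pdx_def by simp

lemma pdx_1 [simp]: "pdx d 1 = 0"
  unfolding pdx_def by (simp add: map_poly_1)

lemma pdx_pCons: "pdx d (pCons c p) = pCons (dx d c) (pdx d p)"
  unfolding pdx_def by (simp add: map_poly_pCons)

lemma pdx_add: "pdx d (p + q) = pdx d p + pdx d q"
  unfolding pdx_def by (intro poly_eqI) (simp add: coeff_map_poly dx_add)

lemma pdx_smult: "pdx d (Polynomial.smult c p) = Polynomial.smult (dx d c) p + Polynomial.smult c (pdx d p)"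
  unfolding pdx_def by (intro poly_eqI) (simp add: coeff_map_poly dx_mult)

lemma pdx_mult: "pdx d (p * q) = pdx d p * q + p * pdx d q"
proof (induct p rule: pCons_induct)
  case (pCons c p)
  have "pdx d (pCons c p * q) = Polynomial.smult (dx d c) q + Polynomial.smult c (pdx d q) + pCons 0 (pdx d p * q + p * pdx d q)"
    by (simp only: mult_pCons_left pdx_add pdx_smult pdx_pCons dx_zero pCons(2))
  then show ?case
    by (simp add: pdx_pCons algebra_simps)
qed simp

lemma pdx_prod: "pdx d (prod f A) = (\<Sum>x\<in>A. prod f (A - {x}) * pdx d (f x))"
proof (induct A rule: infinite_finite_induct)
  case (insert x A)
  have "prod f (insert x A - {y}) = f x * prod f (A - {y})" if "y \<in> A" for y
  proof -
    have "insert x A - {y} = insert x (A - {y})" using insert(2) that by auto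
    then show ?thesis using insert(1,2) by simp
  qed
  then show ?case
    using insert(1,2) by (auto simp: pdx_mult insert(3) sum_distrib_left ac_simps intro!: sum.cong)
qed auto

section \<open>Weighted Laplacians\<close>

text \<open>Maximum principle: at a maximal coordinate every term of the row sum
  \<open>\<Sum>\<^sub>j (-A\<^sub>i\<^sub>j)(x\<^sub>i - x\<^sub>j)\<close> is nonnegative, so all coordinates are equal.\<close>

lemma weighted_laplacian_kernel_real:
  fixes A :: "nat \<Rightarrow> nat \<Rightarrow> real" and x :: "nat \<Rightarrow> real"
  assumes neg: "\<And>i j. i < n \<Longrightarrow> j < n \<Longrightarrow> i \<noteq> j \<Longrightarrow> A i j < 0"
    and diag: "\<And>i. i < n \<Longrightarrow> A i i = - (\<Sum>j\<in>{..<n}-{i}. A i j)"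
    and ker: "\<And>i. i < n \<Longrightarrow> (\<Sum>j<n. A i j * x j) = 0"
    and sum_zero: "(\<Sum>j<n. x j) = 0"
  shows "\<forall>i<n. x i = 0"
proof (cases "n = 0")
  case False
  obtain i0 where i0: "i0 < n" "\<And>j. j < n \<Longrightarrow> x j \<le> x i0"
  proof -
    have "Max (x ` {..<n}) \<in> x ` {..<n}" using False by (intro Max_in) auto
    then obtain i where "i < n" "x i = Max (x ` {..<n})" by auto
    then show ?thesis using that by (metis Max_ge finite_imageI finite_lessThan image_eqI lessThan_iff)
  qed
  have "(\<Sum>j<n. A i0 j * x j) = A i0 i0 * x i0 + (\<Sum>j\<in>{..<n}-{i0}. A i0 j * x j)"
    using i0(1) by (simp add: sum.remove)
  also have "\<dots> = (\<Sum>j\<in>{..<n}-{i0}. (- A i0 j) * (x i0 - x j))"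
    using diag[OF i0(1)] by (simp add: sum_distrib_left sum_distrib_right sum_subtractf algebra_simps)
  finally have "(\<Sum>j\<in>{..<n}-{i0}. (- A i0 j) * (x i0 - x j)) = 0" using ker[OF i0(1)] by simp
  moreover have "\<forall>j\<in>{..<n}-{i0}. 0 \<le> (- A i0 j) * (x i0 - x j)"
  proof
    fix j assume "j \<in> {..<n}-{i0}"
    then have "- A i0 j \<ge> 0" "x i0 - x j \<ge> 0" using neg[of i0 j] i0 by auto
    then show "0 \<le> (- A i0 j) * (x i0 - x j)" by (rule mult_nonneg_nonneg)
  qed
  ultimately have zero: "\<forall>j\<in>{..<n}-{i0}. (- A i0 j) * (x i0 - x j) = 0"
    using sum_nonneg_eq_0_iff[of "{..<n}-{i0}" "\<lambda>j. (- A i0 j) * (x i0 - x j)"] by blast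
  have const: "x j = x i0" if "j < n" for j
  proof (cases "j = i0")
    case False
    then have "(- A i0 j) * (x i0 - x j) = 0" using zero that by simp
    moreover have "A i0 j \<noteq> 0" using neg[OF i0(1) that] False by simp
    ultimately show ?thesis by simp
  qed simp
  then have "of_nat n * x i0 = 0" using sum_zero by simp
  then show ?thesis using const False by simp
qed simp

lemma of_rat_complex: "(of_rat q :: complex) = of_real (of_rat q)"
  by (cases q) (simp add: of_rat_rat)

lemma weighted_laplacian_kernel:
  fixes A :: "nat \<Rightarrow> nat \<Rightarrow> rat" and U :: "nat \<Rightarrow> complex"
  assumes neg: "\<And>i j. i < n \<Longrightarrow> j < n \<Longrightarrow> i \<noteq> j \<Longrightarrow> A i j < 0"
    and diag: "\<And>i. i < n \<Longrightarrow> A i i = - (\<Sum>j\<in>{..<n}-{i}. A i j)"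
    and ker: "\<And>i. i < n \<Longrightarrow> (\<Sum>j<n. of_rat (A i j) * U j) = 0"
    and sum_zero: "(\<Sum>j<n. U j) = 0"
  shows "\<forall>i<n. U i = 0"
proof -
  let ?A = "\<lambda>i j. real_of_rat (A i j)"
  have neg': "\<And>i j. i < n \<Longrightarrow> j < n \<Longrightarrow> i \<noteq> j \<Longrightarrow> ?A i j < 0"
    using neg by simp
  have diag': "\<And>i. i < n \<Longrightarrow> ?A i i = - (\<Sum>j\<in>{..<n}-{i}. ?A i j)"
    using diag by (simp add: of_rat_sum of_rat_minus)
  have ker': "(\<Sum>j<n. ?A i j * Re (U j)) = 0 \<and> (\<Sum>j<n. ?A i j * Im (U j)) = 0"
    if "i < n" for i
  proof -
    have "(\<Sum>j<n. of_rat (A i j) * U j) = (\<Sum>j<n. of_real (?A i j) * U j)"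
      by (simp add: of_rat_complex)
    then have "(\<Sum>j<n. of_real (?A i j) * U j) = 0" using ker[OF that] by simp
    from arg_cong[OF this, of Re] arg_cong[OF this, of Im] show ?thesis by simp
  qed
  have "(\<Sum>j<n. Re (U j)) = 0" "(\<Sum>j<n. Im (U j)) = 0"
    using arg_cong[OF sum_zero, of Re] arg_cong[OF sum_zero, of Im] by simp_all
  then have "\<forall>i<n. Re (U i) = 0" "\<forall>i<n. Im (U i) = 0"
    using weighted_laplacian_kernel_real[OF neg' diag' conjunct1[OF ker']]
      weighted_laplacian_kernel_real[OF neg' diag' conjunct2[OF ker']] by simp_all
  then show ?thesis by (simp add: complex_eq_iff)
qed

lemma sum_offdiag_swap:
  fixes F :: "nat \<Rightarrow> nat \<Rightarrow> 'b::comm_monoid_add"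
  shows "(\<Sum>i<n. \<Sum>j\<in>{..<n}-{i}. F i j) = (\<Sum>j<n. \<Sum>i\<in>{..<n}-{j}. F i j)"
proof -
  have "(\<Sum>i<n. \<Sum>j\<in>{..<n}-{i}. F i j) = (\<Sum>i\<in>{..<n}. \<Sum>j\<in>{j. j\<in>{..<n} \<and> i \<noteq> j}. F i j)"
    by (intro sum.cong) auto
  also have "\<dots> = (\<Sum>j\<in>{..<n}. \<Sum>i\<in>{i. i\<in>{..<n} \<and> i \<noteq> j}. F i j)"
    by (rule sum.swap_restrict) auto
  also have "\<dots> = (\<Sum>j<n. \<Sum>i\<in>{..<n}-{j}. F i j)"
    by (intro sum.cong) auto
  finally show ?thesis .
qed

section \<open>The complete magic matrix\<close>

locale small_distinct_roots =
  fixes n d :: nat and a :: "nat \<Rightarrow> complex fls"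
  assumes d_pos: "d \<ge> 1"
    and distinct: "\<forall>i<n. \<forall>j<n. i \<noteq> j \<longrightarrow> a i \<noteq> a j"
    and nu_roots_pos: "\<forall>i<n. nu_gt d (a i) 0"
begin

definition dquot :: "nat \<Rightarrow> nat \<Rightarrow> complex fls" where
  "dquot i j = (dx d (a i) - dx d (a j)) / (a i - a j)"

lemma magic_dquot:
  "magic n d a i j = (if i = j then (\<Sum>k\<in>{..<n}-{i}. dquot i k) else - dquot i j)"
  unfolding magic_def dquot_def by (simp add: diff_divide_distrib)

lemma dquot_sym: "dquot i j = dquot j i"
  unfolding dquot_def by (metis minus_diff_eq minus_divide_divide)

lemma roots_vanish_below: "i < n \<Longrightarrow> vanishes_below 1 (a i)"
  using nu_roots_pos nu_gt_iff_vanishes_below[OF d_pos, of "a i" 0] by simp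

lemma root_diff:
  assumes "i < n" "j < n" "i \<noteq> j"
  shows "a i - a j \<noteq> 0" and "1 \<le> fls_subdegree (a i - a j)"
proof -
  show nz: "a i - a j \<noteq> 0" using distinct assms by auto
  have "vanishes_below 1 (a i - a j)"
    using roots_vanish_below assms by (simp add: vanishes_below_diff)
  then show "1 \<le> fls_subdegree (a i - a j)" using vanishes_below_iff_subdegree nz by blast
qed

lemma dquot_leading:
  assumes "i < n" "j < n" "i \<noteq> j"
  shows "vanishes_below (- int d) (dquot i j)"
    and "dquot i j $$ (- int d) = of_rat (nu d (a i - a j))"
proof -
  have dquot: "dquot i j = dx d (a i - a j) / (a i - a j)"
    unfolding dquot_def by (simp add: dx_diff)
  note leading = log_derivative_leading[OF d_pos root_diff(1)[OF assms]]
  have "fls_subdegree (a i - a j) \<noteq> 0" using root_diff[OF assms] by simp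
  from leading[OF this] show "vanishes_below (- int d) (dquot i j)"
    and "dquot i j $$ (- int d) = of_rat (nu d (a i - a j))"
    unfolding dquot nu_def by (simp_all add: of_rat_divide)
qed

lemma Amat_offdiag_neg: "i < n \<Longrightarrow> j < n \<Longrightarrow> i \<noteq> j \<Longrightarrow> Amat n d a i j < 0"
  using root_diff(2)[of i j] d_pos unfolding Amat_def nu_def by simp

lemma Amat_diag: "i < n \<Longrightarrow> Amat n d a i i = - (\<Sum>j\<in>{..<n}-{i}. Amat n d a i j)"
  unfolding Amat_def by (simp add: sum_negf)

lemma magic_leading:
  assumes "i < n" "j < n"
  shows "vanishes_below (- int d) (magic n d a i j)"
    and "magic n d a i j $$ (- int d) = of_rat (Amat n d a i j)"
proof -
  have "vanishes_below (- int d) (magic n d a i j)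
        \<and> magic n d a i j $$ (- int d) = of_rat (Amat n d a i j)"
  proof (cases "i = j")
    case True
    then show ?thesis using dquot_leading assms unfolding magic_dquot Amat_def
      by (auto intro!: vanishes_below_sum simp: fls_nth_sum of_rat_sum)
  next
    case False
    then show ?thesis using dquot_leading[OF assms False] vanishes_below_uminus
      unfolding magic_dquot Amat_def by (simp add: of_rat_minus)
  qed
  then show "vanishes_below (- int d) (magic n d a i j)"
    "magic n d a i j $$ (- int d) = of_rat (Amat n d a i j)" by auto
qed

lemma magic_app_leading:
  assumes z: "\<And>j. j < n \<Longrightarrow> vanishes_below p (z j)" and i: "i < n"
  shows "vanishes_below (p - int d) (magic_app n d a z i)"
    and "magic_app n d a z i $$ (p - int d) = (\<Sum>j<n. of_rat (Amat n d a i j) * z j $$ p)"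
proof -
  have p: "p - int d = - int d + p" by simp
  note summand = vanishes_below_mult[OF magic_leading(1)[OF i] z]
  show "vanishes_below (p - int d) (magic_app n d a z i)"
    unfolding magic_app_def p using summand(1) by (intro vanishes_below_sum) auto
  show "magic_app n d a z i $$ (p - int d) = (\<Sum>j<n. of_rat (Amat n d a i j) * z j $$ p)"
    unfolding magic_app_def p fls_nth_sum using summand(2) magic_leading(2)[OF i] by simp
qed

text \<open>Index \<open>k\<close> stands for \<open>x\<^sup>k\<^sup>/\<^sup>d\<close>, so the shift by \<open>d\<close> is the loss of exactly one unit of valuation.\<close>

lemma magic_app_order:
  assumes F: "inF n z" and nz: "\<exists>i<n. z i \<noteq> 0"
  obtains p where "\<forall>j<n. vanishes_below p (z j)"
    and "\<exists>i<n. magic_app n d a z i $$ (p - int d) \<noteq> 0"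
proof -
  define T where "T = {i. i < n \<and> z i \<noteq> 0}"
  define p where "p = Min ((\<lambda>i. fls_subdegree (z i)) ` T)"
  have T: "finite T" "T \<noteq> {}" using nz unfolding T_def by auto
  have low: "\<forall>j<n. vanishes_below p (z j)"
  proof (intro allI impI)
    fix j assume "j < n"
    show "vanishes_below p (z j)"
    proof (cases "z j = 0")
      case False
      then have "p \<le> fls_subdegree (z j)" unfolding p_def using T \<open>j < n\<close> T_def by auto
      then show ?thesis using vanishes_below_iff_subdegree False by blast
    qed simp
  qed
  have "p \<in> (\<lambda>i. fls_subdegree (z i)) ` T" unfolding p_def using T by (intro Min_in) auto
  then obtain i1 where i1: "i1 < n" "z i1 $$ p \<noteq> 0" unfolding T_def by auto
  have "(\<Sum>j<n. z j $$ p) = 0"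
    using F unfolding inF_def by (metis fls_nth_sum fls_zero_nth)
  then have "\<not> (\<forall>i<n. (\<Sum>j<n. of_rat (Amat n d a i j) * z j $$ p) = 0)"
    using weighted_laplacian_kernel[of n "Amat n d a" "\<lambda>j. z j $$ p"]
      Amat_offdiag_neg Amat_diag i1 by blast
  then obtain i where i: "i < n" "(\<Sum>j<n. of_rat (Amat n d a i j) * z j $$ p) \<noteq> 0"
    by blast
  show ?thesis
  proof (rule that[OF low])
    show "\<exists>i<n. magic_app n d a z i $$ (p - int d) \<noteq> 0"
      using i magic_app_leading(2)[of p z i] low by auto
  qed
qed

lemma magic_injective_on_F:
  "inF n z \<Longrightarrow> \<forall>i<n. magic_app n d a z i = 0 \<Longrightarrow> \<forall>i<n. z i = 0"
  using magic_app_order by (metis fls_zero_nth)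

lemma magic_app_diff:
  "magic_app n d a (\<lambda>i. x i - y i) i = magic_app n d a x i - magic_app n d a y i"
  unfolding magic_app_def by (simp add: right_diff_distrib sum_subtractf)

lemma magic_colsum: "j < n \<Longrightarrow> (\<Sum>i<n. magic n d a i j) = 0"
  by (simp add: sum.remove[of _ j] magic_dquot sum_negf dquot_sym)

lemma magic_app_sum: "(\<Sum>i<n. magic_app n d a z i) = 0"
  unfolding magic_app_def
  by (subst sum.swap) (simp add: sum_distrib_right[symmetric] magic_colsum)

text \<open>Adding the all-ones matrix makes \<open>\<A>\<close> injective on all vectors, since its columns sum to zero.\<close>

lemma magic_surjective_on_F:
  assumes n: "n > 0" and w: "inF n w"
  obtains u where "inF n u" and "\<forall>i<n. magic_app n d a u i = w i"
proof -
  define M where "M i j = magic n d a i j + 1" for i j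
  have M: "(\<Sum>j<n. M i j * x j) = magic_app n d a x i + (\<Sum>j<n. x j)" for i x
    unfolding magic_app_def M_def by (simp add: distrib_right sum.distrib)
  have sum_M: "(\<Sum>i<n. \<Sum>j<n. M i j * x j) = of_nat n * (\<Sum>j<n. x j)" for x
    unfolding M by (simp add: sum.distrib magic_app_sum)
  have "\<forall>i<n. x i = 0" if "\<forall>i<n. (\<Sum>j<n. M i j * x j) = 0" for x
  proof -
    have "(\<Sum>j<n. x j) = 0" using that sum_M[of x] n by simp
    then show ?thesis using that magic_injective_on_F unfolding M inF_def by simp
  qed
  then obtain u where u: "\<forall>i<n. (\<Sum>j<n. M i j * u j) = w i"
    using square_system_solvable_if_injective by blast
  then have "of_nat n * (\<Sum>j<n. u j) = 0" using sum_M[of u] w unfolding inF_def by simp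
  then have "(\<Sum>j<n. u j) = 0" using n by simp
  then show ?thesis using that u unfolding inF_def M by simp
qed

lemma E_ge_magic_preimage:
  assumes F: "inF n u" and w: "E_ge n d (magic_app n d a u) r"
  shows "E_ge n d u (r + 1)"
proof (rule ccontr)
  assume not_ge: "\<not> E_ge n d u (r + 1)"
  then obtain p where p: "\<forall>j<n. vanishes_below p (u j)"
    and "\<exists>i<n. magic_app n d a u i $$ (p - int d) \<noteq> 0"
    using magic_app_order[OF F] unfolding E_ge_def nu_ge_def by blast
  then have "p - int d \<ge> \<lceil>r * of_nat d\<rceil>"
    using w unfolding E_ge_iff_vanishes_below[OF d_pos] vanishes_below_def by force
  then show False
    using not_ge p vanishes_below_mono
    unfolding E_ge_iff_vanishes_below[OF d_pos] ceiling_succ_mult_of_nat by fastforce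
qed

lemma E_gt_mult_dx_root:
  assumes "E_ge n d u (r + 1)"
  shows "E_gt n d (\<lambda>i. u i * dx d (a i)) r"
  unfolding E_gt_iff_vanishes_below[OF d_pos]
proof (intro allI impI)
  fix i assume i: "i < n"
  have "vanishes_below (\<lceil>(r + 1) * of_nat d\<rceil> + (1 - int d)) (u i * dx d (a i))"
    using assms i vanishes_below_dx[OF roots_vanish_below[OF i]]
    unfolding E_ge_iff_vanishes_below[OF d_pos] by (auto intro: vanishes_below_mult)
  moreover have "\<lfloor>r * of_nat d\<rfloor> + 1 \<le> \<lceil>(r + 1) * of_nat d\<rceil> + (1 - int d)"
    using floor_le_ceiling[of "r * of_nat d"] unfolding ceiling_succ_mult_of_nat by simp
  ultimately show "vanishes_below (\<lfloor>r * of_nat d\<rfloor> + 1) (u i * dx d (a i))"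
    using vanishes_below_mono by blast
qed

lemma in_r_magic_app:
  assumes u: "E_ge n d u (r + 1)" and i: "i < n"
  shows "in_r d (magic_app n d a u) r i = Amat_app n d a (in_r d u (r + 1)) i"
proof (cases "r * of_nat d \<in> \<int>")
  case True
  then obtain m where m: "r * of_nat d = of_int m" by (auto elim: Ints_cases)
  have m': "(r + 1) * of_nat d = of_int (m + int d)" using m by (simp add: distrib_right)
  have "\<forall>j<n. vanishes_below (m + int d) (u j)"
    using u unfolding E_ge_iff_vanishes_below[OF d_pos] m' ceiling_of_int .
  then show ?thesis
    using magic_app_leading(2)[of "m + int d" u i] i
    unfolding in_r_def coeff_x_def Amat_app_def m m' by simp
next
  case False
  have "(r + 1) * of_nat d \<notin> \<int>"
  proof
    assume "(r + 1) * of_nat d \<in> \<int>"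
    then have "(r + 1) * of_nat d - of_nat d \<in> \<int>" by (intro Ints_diff) auto
    with False show False by (simp add: distrib_right)
  qed
  with False show ?thesis unfolding in_r_def coeff_x_def Amat_app_def by simp
qed

section \<open>The polynomial identity\<close>

definition eps2 :: "nat \<Rightarrow> nat \<Rightarrow> complex fls poly" where
  "eps2 i j = (\<Prod>k\<in>{..<n}-{i,j}. [:- a k, 1:])"

lemma eps2_sym: "eps2 i j = eps2 j i"
  unfolding eps2_def by (simp add: insert_commute)

lemma fpoly_eq_eps: "i < n \<Longrightarrow> fpoly n a = [:- a i, 1:] * eps n a i"
  unfolding fpoly_def eps_def by (simp add: prod.remove)

lemma eps_eq_eps2: "i < n \<Longrightarrow> j < n \<Longrightarrow> i \<noteq> j \<Longrightarrow> eps n a i = [:- a j, 1:] * eps2 i j"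
proof -
  assume "i < n" "j < n" "i \<noteq> j"
  then have "{..<n}-{i} = insert j ({..<n}-{i,j})" by auto
  then show ?thesis unfolding eps_def eps2_def by simp
qed

lemma eps_mult_eps:
  assumes "i < n" "j < n" "i \<noteq> j"
  shows "eps n a i * eps n a j = fpoly n a * eps2 i j"
proof -
  have "eps n a i * eps n a j = ([:- a j, 1:] * eps n a j) * eps2 i j"
    using eps_eq_eps2[OF assms] by (simp only: ac_simps)
  then show ?thesis using fpoly_eq_eps[OF assms(2)] by simp
qed

lemma eps_diff_eps:
  assumes "i < n" "j < n" "i \<noteq> j"
  shows "eps n a i - eps n a j = Polynomial.smult (a i - a j) (eps2 i j)"
proof -
  have "eps n a i - eps n a j = ([:- a j, 1:] - [:- a i, 1:]) * eps2 i j"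
    using eps_eq_eps2[OF assms] eps_eq_eps2[of j i] assms eps2_sym[of i j]
    by (simp only: left_diff_distrib)
  also have "[:- a j, 1:] - [:- a i, 1:] = [:a i - a j:]" by simp
  finally show ?thesis by simp
qed

lemma pderiv_fpoly: "pderiv (fpoly n a) = vec_poly n a (\<lambda>i. 1)"
  unfolding fpoly_def vec_poly_def eps_def pderiv_prod by (simp add: pderiv_pCons)

lemma pdx_fpoly: "pdx d (fpoly n a) = vec_poly n a (\<lambda>i. - dx d (a i))"
  unfolding fpoly_def vec_poly_def eps_def pdx_prod by (simp add: pdx_pCons dx_uminus ac_simps)

lemma vec_poly_cong: "(\<And>i. i < n \<Longrightarrow> u i = u' i) \<Longrightarrow> vec_poly n a u = vec_poly n a u'"
  unfolding vec_poly_def by (intro sum.cong) auto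

lemma vec_poly_mult: "vec_poly n a x * vec_poly n a y =
   (\<Sum>i<n. \<Sum>j<n. Polynomial.smult (x i * y j) (eps n a i * eps n a j))"
  unfolding vec_poly_def sum_product by (simp add: mult_ac)

lemma magic_app_offdiag:
  "i < n \<Longrightarrow> magic_app n d a u i
     = (\<Sum>j\<in>{..<n}-{i}. u i * dquot i j) - (\<Sum>j\<in>{..<n}-{i}. u j * dquot j i)"
  unfolding magic_app_def
  by (simp add: sum.remove[of _ i] magic_dquot sum_distrib_left sum_distrib_right
      sum_negf dquot_sym mult_ac)

lemma vec_poly_magic_app:
  "vec_poly n a (magic_app n d a u)
     = (\<Sum>i<n. \<Sum>j\<in>{..<n}-{i}. Polynomial.smult (u i * dquot i j) (eps n a i - eps n a j))"
proof -
  have "vec_poly n a (magic_app n d a u)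
     = (\<Sum>i<n. Polynomial.smult ((\<Sum>j\<in>{..<n}-{i}. u i * dquot i j)
                                  - (\<Sum>j\<in>{..<n}-{i}. u j * dquot j i)) (eps n a i))"
    unfolding vec_poly_def by (rule sum.cong[OF refl]) (simp add: magic_app_offdiag)
  also have "\<dots> = (\<Sum>i<n. \<Sum>j\<in>{..<n}-{i}. Polynomial.smult (u i * dquot i j) (eps n a i))
       - (\<Sum>i<n. \<Sum>j\<in>{..<n}-{i}. Polynomial.smult (u j * dquot j i) (eps n a i))"
    by (simp add: smult_diff_left smult_sum sum_subtractf)
  also have "(\<Sum>i<n. \<Sum>j\<in>{..<n}-{i}. Polynomial.smult (u j * dquot j i) (eps n a i))
      = (\<Sum>i<n. \<Sum>j\<in>{..<n}-{i}. Polynomial.smult (u i * dquot i j) (eps n a j))"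
    by (rule sum_offdiag_swap)
  finally show ?thesis by (simp add: smult_diff_right sum_subtractf)
qed

lemma equation_magic_identity:
  "vec_poly n a u * pdx d (fpoly n a) + vec_poly n a (\<lambda>i. u i * dx d (a i)) * pderiv (fpoly n a)
    = fpoly n a * vec_poly n a (magic_app n d a u)"
proof -
  let ?E = "eps n a" and ?da = "\<lambda>i. dx d (a i)"
  have "vec_poly n a u * pdx d (fpoly n a) + vec_poly n a (\<lambda>i. u i * ?da i) * pderiv (fpoly n a)
     = (\<Sum>i<n. \<Sum>j<n. Polynomial.smult (u i * (?da i - ?da j)) (?E i * ?E j))"
    unfolding pdx_fpoly pderiv_fpoly vec_poly_mult
    by (simp add: sum.distrib[symmetric] smult_add_left[symmetric] smult_diff_left algebra_simps)
  also have "\<dots> = (\<Sum>i<n. \<Sum>j\<in>{..<n}-{i}. Polynomial.smult (u i * (?da i - ?da j)) (?E i * ?E j))"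
    by (rule sum.cong[OF refl]) (simp add: sum_diff1)
  also have "\<dots> = fpoly n a * vec_poly n a (magic_app n d a u)"
    unfolding vec_poly_magic_app sum_distrib_left
  proof (intro sum.cong refl)
    fix i j assume "i \<in> {..<n}" "j \<in> {..<n}-{i}"
    then have ij: "i < n" "j < n" "i \<noteq> j" by auto
    have "?da i - ?da j = dquot i j * (a i - a j)"
      unfolding dquot_def using root_diff(1)[OF ij] by simp
    then show "Polynomial.smult (u i * (?da i - ?da j)) (?E i * ?E j)
        = fpoly n a * Polynomial.smult (u i * dquot i j) (?E i - ?E j)"
      using eps_mult_eps[OF ij] eps_diff_eps[OF ij] by (simp add: mult_ac)
  qed
  finally show ?thesis .
qed

lemma poly_vec_poly_root: "k < n \<Longrightarrow> poly (vec_poly n a u) (a k) = u k * poly (eps n a k) (a k)"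
  unfolding vec_poly_def poly_sum
  by (simp add: sum.remove[of _ k] eps_eq_eps2[of _ k] sum.neutral)

lemma poly_eps_root_nonzero: "k < n \<Longrightarrow> poly (eps n a k) (a k) \<noteq> 0"
  unfolding eps_def using distinct by (auto simp: poly_prod)

lemma equation_at_roots:
  assumes "vec_poly n a u * pdx d (fpoly n a) + vec_poly n a v * pderiv (fpoly n a)
           = vec_poly n a w * fpoly n a"
    and k: "k < n"
  shows "v k = u k * dx d (a k)"
proof -
  let ?c = "poly (eps n a k) (a k)"
  have "poly (vec_poly n a u * pdx d (fpoly n a) + vec_poly n a v * pderiv (fpoly n a)) (a k) = 0"
    using assms(1) fpoly_eq_eps[OF k] by simp
  then have "?c * ?c * (v k - u k * dx d (a k)) = 0"
    unfolding pdx_fpoly pderiv_fpoly using poly_vec_poly_root[OF k] by (simp add: algebra_simps)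
  then show ?thesis using poly_eps_root_nonzero[OF k] by simp
qed

lemma equation_imp_magic_app:
  assumes eq: "vec_poly n a u * pdx d (fpoly n a) + vec_poly n a v * pderiv (fpoly n a)
               = vec_poly n a w * fpoly n a"
    and k: "k < n"
  shows "magic_app n d a u k = w k"
proof -
  have "vec_poly n a v = vec_poly n a (\<lambda>i. u i * dx d (a i))"
    using equation_at_roots[OF eq] by (intro vec_poly_cong)
  moreover have "fpoly n a \<noteq> 0" unfolding fpoly_def by simp
  ultimately have "vec_poly n a (magic_app n d a u) = vec_poly n a w"
    using eq equation_magic_identity[of u] by (simp add: mult.commute)
  then have "magic_app n d a u k * poly (eps n a k) (a k) = w k * poly (eps n a k) (a k)"
    using poly_vec_poly_root[OF k] by metis
  then show ?thesis using poly_eps_root_nonzero[OF k] by simp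
qed

lemma equation_solution_unique:
  assumes "inF n u" "\<forall>i<n. magic_app n d a u i = w i"
    and "inF n u'"
    and eq: "vec_poly n a u' * pdx d (fpoly n a) + vec_poly n a v' * pderiv (fpoly n a)
           = vec_poly n a w * fpoly n a"
  shows "\<forall>i<n. u' i = u i \<and> v' i = u i * dx d (a i)"
proof -
  have "inF n (\<lambda>i. u' i - u i)" using assms(1,3) unfolding inF_def by (simp add: sum_subtractf)
  moreover have "\<forall>i<n. magic_app n d a (\<lambda>i. u' i - u i) i = 0"
    using assms(2) equation_imp_magic_app[OF eq] by (simp add: magic_app_diff)
  ultimately have "\<forall>i<n. u' i = u i" using magic_injective_on_F by fastforce
  then show ?thesis using equation_at_roots[OF eq] by simp
qed

end

theorem mainTheorem3:
  fixes n d :: nat and a w :: "nat \<Rightarrow> complex fls" and r :: rat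
  assumes "n \<ge> 2" and "d \<ge> 1"
    and "\<forall>i<n. \<forall>j<n. i \<noteq> j \<longrightarrow> a i \<noteq> a j"
    and "\<forall>i<n. nu_gt d (a i) 0"
    and "inF n w" and "E_ge n d w r"
  shows "\<exists>u v.
     inF n u
     \<and> vec_poly n a u * pdx d (fpoly n a) + vec_poly n a v * pderiv (fpoly n a)
         = vec_poly n a w * fpoly n a
     \<and> (\<forall>u' v'. inF n u' \<and>
          vec_poly n a u' * pdx d (fpoly n a) + vec_poly n a v' * pderiv (fpoly n a)
            = vec_poly n a w * fpoly n a
          \<longrightarrow> (\<forall>i<n. u' i = u i \<and> v' i = v i))
     \<and> (\<forall>i<n. magic_app n d a u i = w i)
     \<and> (\<forall>i<n. v i = u i * dx d (a i))
     \<and> E_ge n d u (r + 1)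
     \<and> E_gt n d v r
     \<and> inF n (in_r d u (r + 1))
     \<and> (\<forall>i<n. Amat_app n d a (in_r d u (r + 1)) i = in_r d w r i)"
proof -
  interpret small_distinct_roots n d a using assms(2-4) by unfold_locales
  obtain u where u: "inF n u" and magic_u: "\<forall>i<n. magic_app n d a u i = w i"
    using magic_surjective_on_F[OF _ assms(5)] assms(1) by (metis less_le_trans pos2)
  define v where "v i = u i * dx d (a i)" for i
  have "vec_poly n a (magic_app n d a u) = vec_poly n a w"
    using magic_u by (intro vec_poly_cong) auto
  then have eq: "vec_poly n a u * pdx d (fpoly n a) + vec_poly n a v * pderiv (fpoly n a)
      = vec_poly n a w * fpoly n a"
    using equation_magic_identity[of u] unfolding v_def by (simp add: mult.commute)
  have "E_ge n d (magic_app n d a u) r" using assms(6) magic_u unfolding E_ge_def by simp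
  then have u_ge: "E_ge n d u (r + 1)" by (rule E_ge_magic_preimage[OF u])
  have "\<forall>i<n. Amat_app n d a (in_r d u (r + 1)) i = in_r d w r i"
    using in_r_magic_app[OF u_ge] magic_u by (simp add: in_r_def)
  then show ?thesis
    using u eq magic_u u_ge E_gt_mult_dx_root[OF u_ge] inF_in_r[OF u]
      equation_solution_unique[OF u magic_u]
    unfolding v_def by blast
qed

end
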